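(* Let $\Pi$ be a set of policies and $\Theta^T$ a finite set of environment parameterizations, and for each $\vec\theta\in\Theta^T$ and $\pi\in\Pi$ let $U^{\vec\theta}(\pi)\in\mathbb{R}$ be the utility of $\pi$ in the environment parameterized by $\vec\theta$; assume that for each $\vec\theta$ the maximum $\max_{\pi'\in\Pi}U^{\vec\theta}(\pi')$ is attained and that the set $\textsc{MinimaxRegret}$ defined below is nonempty. Let real numbers $\mathbf{F}_{min}\le\mathbf{F}_{max}<\mathbf{S}_{min}\le\mathbf{S}_{max}$ satisfy $\mathbf{S}_{max}-\mathbf{S}_{min}<\mathbf{S}_{min}-\mathbf{F}_{max}$ and $\mathbf{F}_{max}-\mathbf{F}_{min}<\mathbf{S}_{min}-\mathbf{F}_{max}$, and suppose that every achievable utility satisfies $U^{\vec\theta}(\pi)\in[\mathbf{F}_{min},\mathbf{F}_{max}]\cup[\mathbf{S}_{min},\mathbf{S}_{max}]$ for all $\pi\in\Pi$, $\vec\theta\in\Theta^T$. Say $\pi$ succeeds on $\vec\theta$ if $U^{\vec\theta}(\pi)\in[\mathbf{S}_{min},\mathbf{S}_{max}]$. Suppose there exists $\pi^*\in\Pi$ such that for every $\vec\theta\in\Theta^T$, if some policy in $\Pi$ succeeds on $\vec\theta$ then $\pi^*$ succeeds on $\vec\theta$. Then every $\pi\in\textsc{MinimaxRegret}$ has the same property: for every $\vec\theta\in\Theta^T$, if some policy in $\Pi$ succeeds on $\vec\theta$, then $\pi$ succeeds on $\vec\theta$.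
   Context: Regret of a policy $\pi$ on parameterization $\vec\theta$: $\textsc{Regret}(\pi,\vec\theta)=\max_{\pi^B\in\Pi}\{U^{\vec\theta}(\pi^B)-U^{\vec\theta}(\pi)\}$. The set of minimax regret policies is $\textsc{MinimaxRegret}=\arg\min_{\pi\in\Pi}\max_{\vec\theta\in\Theta^T}\textsc{Regret}(\pi,\vec\theta)$. (In the paper, $\vec\theta$ ranges over sequences of free parameters of an underspecified POMDP, and $U^{\vec\theta}(\pi)$ is the expected discounted return of $\pi$ in the POMDP obtained by fixing those parameters.) *)

theory Defs
  imports "HOL-Analysis.Analysis"
begin

definition regret :: "'p set \<Rightarrow> ('t \<Rightarrow> 'p \<Rightarrow> real) \<Rightarrow> 'p \<Rightarrow> 't \<Rightarrow> real" where
  "regret Pols U pol th = (SUP pB\<in>Pols. U th pB - U th pol)"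

definition max_regret :: "'p set \<Rightarrow> 't set \<Rightarrow> ('t \<Rightarrow> 'p \<Rightarrow> real) \<Rightarrow> 'p \<Rightarrow> real" where
  "max_regret Pols Theta U pol = (SUP th\<in>Theta. regret Pols U pol th)"

definition minimax_regret :: "'p set \<Rightarrow> 't set \<Rightarrow> ('t \<Rightarrow> 'p \<Rightarrow> real) \<Rightarrow> 'p set" where
  "minimax_regret Pols Theta U =
     {pol \<in> Pols. \<forall>pol' \<in> Pols. max_regret Pols Theta U pol \<le> max_regret Pols Theta U pol'}"

definition succeeds :: "real \<Rightarrow> real \<Rightarrow> ('t \<Rightarrow> 'p \<Rightarrow> real) \<Rightarrow> 'p \<Rightarrow> 't \<Rightarrow> bool" where
  "succeeds Smin Smax U pol th \<longleftrightarrow> U th pol \<in> {Smin..Smax}"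

end

theory Submission
  imports Defs
begin

text \<open>A policy that fails where some policy succeeds has regret at least \<open>Smin - Fmax\<close>
  there, while the policy \<open>pstar\<close> that succeeds wherever success is possible has regret at
  most \<open>max (Smax - Smin) (Fmax - Fmin)\<close> everywhere: within the success band if the best
  policy succeeds, within the failure band otherwise. The gap hypotheses make the first
  bound exceed the second, so a minimax regret policy can never fail where success is
  possible.\<close>

lemma regret_eq_best:
  assumes "pB \<in> Pols" "\<forall>p\<in>Pols. U th p \<le> U th pB"
  shows "regret Pols U pol th = U th pB - U th pol"
proof -
  have "bdd_above ((\<lambda>q. U th q - U th pol) ` Pols)"
    using assms by (intro bdd_aboveI[where M = "U th pB - U th pol"]) auto
  then have "U th pB - U th pol \<le> (SUP q\<in>Pols. U th q - U th pol)"
    using assms(1) by (rule cSUP_upper2) simp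
  moreover have "(SUP q\<in>Pols. U th q - U th pol) \<le> U th pB - U th pol"
    using assms by (intro cSUP_least) auto
  ultimately show ?thesis
    unfolding regret_def by linarith
qed

lemma regret_le_max_regret:
  assumes "finite Theta" "th \<in> Theta"
  shows "regret Pols U pol th \<le> max_regret Pols Theta U pol"
  unfolding max_regret_def using assms by (intro cSUP_upper) auto

lemma max_regret_le:
  assumes "Theta \<noteq> {}" "\<forall>th\<in>Theta. regret Pols U pol th \<le> c"
  shows "max_regret Pols Theta U pol \<le> c"
  unfolding max_regret_def using assms by (intro cSUP_least) auto

lemma regret_ge_if_fails:
  assumes best: "pB \<in> Pols" "\<forall>p\<in>Pols. U th p \<le> U th pB"
    and "p \<in> Pols" "succeeds Smin Smax U p th"
    and fails: "\<not> succeeds Smin Smax U pol th"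
    and "U th pol \<in> {Fmin..Fmax} \<union> {Smin..Smax}"
  shows "regret Pols U pol th \<ge> Smin - Fmax"
proof -
  have "U th pol \<le> Fmax" "Smin \<le> U th p" "U th p \<le> U th pB"
    using assms unfolding succeeds_def by auto
  then show ?thesis
    using regret_eq_best[where U = U and pol = pol, OF best] by linarith
qed

lemma regret_le_if_succeeds_when_possible:
  assumes best: "pB \<in> Pols" "\<forall>p\<in>Pols. U th p \<le> U th pB"
    and ord: "Fmin \<le> Fmax" "Fmax < Smin"
    and range: "\<forall>p\<in>Pols. U th p \<in> {Fmin..Fmax} \<union> {Smin..Smax}"
    and "pstar \<in> Pols"
    and dominant: "(\<exists>p\<in>Pols. succeeds Smin Smax U p th) \<longrightarrow> succeeds Smin Smax U pstar th"
  shows "regret Pols U pstar th \<le> max (Smax - Smin) (Fmax - Fmin)"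
proof (cases "succeeds Smin Smax U pB th")
  case True
  then have "Smin \<le> U th pstar" "U th pB \<le> Smax"
    using dominant best unfolding succeeds_def by auto
  then show ?thesis
    using regret_eq_best[where U = U and pol = pstar, OF best] by simp
next
  case False
  then have "U th pB \<le> Fmax" "Fmin \<le> U th pstar"
    using range best \<open>pstar \<in> Pols\<close> ord unfolding succeeds_def by fastforce+
  then show ?thesis
    using regret_eq_best[where U = U and pol = pstar, OF best] by simp
qed

lemma max_regret_le_if_succeeds_when_possible:
  assumes "Theta \<noteq> {}"
    and attained: "\<forall>th\<in>Theta. \<exists>pB\<in>Pols. \<forall>p\<in>Pols. U th p \<le> U th pB"
    and ord: "Fmin \<le> Fmax" "Fmax < Smin"
    and range: "\<forall>th\<in>Theta. \<forall>p\<in>Pols. U th p \<in> {Fmin..Fmax} \<union> {Smin..Smax}"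
    and "pstar \<in> Pols"
    and dominant: "\<forall>th\<in>Theta.
      (\<exists>p\<in>Pols. succeeds Smin Smax U p th) \<longrightarrow> succeeds Smin Smax U pstar th"
  shows "max_regret Pols Theta U pstar \<le> max (Smax - Smin) (Fmax - Fmin)"
proof (rule max_regret_le[OF \<open>Theta \<noteq> {}\<close>], rule ballI)
  fix th assume "th \<in> Theta"
  then obtain pB where "pB \<in> Pols" "\<forall>p\<in>Pols. U th p \<le> U th pB"
    using attained by blast
  then show "regret Pols U pstar th \<le> max (Smax - Smin) (Fmax - Fmin)"
    using \<open>th \<in> Theta\<close> ord range \<open>pstar \<in> Pols\<close> dominant
    by (intro regret_le_if_succeeds_when_possible) auto
qed

theorem theorem1:
  fixes Pols :: "'p set" and Theta :: "'t set" and U :: "'t \<Rightarrow> 'p \<Rightarrow> real"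
    and Fmin Fmax Smin Smax :: real
  assumes fin: "finite Theta"
    and attained: "\<forall>th\<in>Theta. \<exists>pB\<in>Pols. \<forall>p\<in>Pols. U th p \<le> U th pB"
    and mmr_ne: "minimax_regret Pols Theta U \<noteq> {}"
    and ord: "Fmin \<le> Fmax" "Fmax < Smin" "Smin \<le> Smax"
    and gapS: "Smax - Smin < Smin - Fmax"
    and gapF: "Fmax - Fmin < Smin - Fmax"
    and range: "\<forall>th\<in>Theta. \<forall>p\<in>Pols. U th p \<in> {Fmin..Fmax} \<union> {Smin..Smax}"
    and star: "\<exists>pstar\<in>Pols. \<forall>th\<in>Theta.
                 (\<exists>p\<in>Pols. succeeds Smin Smax U p th) \<longrightarrow> succeeds Smin Smax U pstar th"
  shows "\<forall>pol\<in>minimax_regret Pols Theta U. \<forall>th\<in>Theta.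
           (\<exists>p\<in>Pols. succeeds Smin Smax U p th) \<longrightarrow> succeeds Smin Smax U pol th"
proof (intro ballI impI, rule ccontr)
  fix pol th
  assume pol: "pol \<in> minimax_regret Pols Theta U" and th: "th \<in> Theta"
    and possible: "\<exists>p\<in>Pols. succeeds Smin Smax U p th"
    and fails: "\<not> succeeds Smin Smax U pol th"
  obtain pstar where pstar: "pstar \<in> Pols" "\<forall>th\<in>Theta.
      (\<exists>p\<in>Pols. succeeds Smin Smax U p th) \<longrightarrow> succeeds Smin Smax U pstar th"
    using star by blast
  have "pol \<in> Pols" and minimal: "max_regret Pols Theta U pol \<le> max_regret Pols Theta U pstar"
    using pol pstar(1) unfolding minimax_regret_def by auto
  obtain pB where best: "pB \<in> Pols" "\<forall>p\<in>Pols. U th p \<le> U th pB"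
    using attained th by blast
  obtain p where "p \<in> Pols" "succeeds Smin Smax U p th"
    using possible by blast
  then have "Smin - Fmax \<le> regret Pols U pol th"
    using best fails range th \<open>pol \<in> Pols\<close> by (intro regret_ge_if_fails) auto
  also have "\<dots> \<le> max_regret Pols Theta U pol"
    using fin th by (rule regret_le_max_regret)
  also have "\<dots> \<le> max_regret Pols Theta U pstar"
    by (fact minimal)
  also have "\<dots> \<le> max (Smax - Smin) (Fmax - Fmin)"
    using th attained ord range pstar by (intro max_regret_le_if_succeeds_when_possible) auto
  finally show False
    using gapS gapF by linarith
qed

end
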